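(* For every tree $T$ with at least one edge, $sr(T)=\lceil \Delta(T)/2\rceil$, where $\Delta(T)$ is the maximum degree of $T$.
   Context: All graphs are finite, simple and undirected. For a set $E'$ of edges of a graph, the subgraph induced by $E'$ is the graph whose edge set is $E'$ and whose vertex set is the set of endpoints of edges in $E'$. A graph is semiregular (a $[d,d+1]$-graph) if there is an integer $d$ such that every vertex has degree $d$ or $d+1$. The semiregular number $sr(G)$ of a graph $G$ is the minimum number of subsets into which $E(G)$ can be partitioned so that the subgraph induced by each subset is semiregular. *)

theory Defs
  imports Main
begin

text \<open>A finite simple graph is represented by its edge set E, a finite set of
  2-element vertex sets. Its vertex set is taken to be the union of the edges
  (a tree with at least one edge has no isolated vertices).\<close>

definition simple_graph :: "'a set set \<Rightarrow> bool" where
  "simple_graph E \<longleftrightarrow> finite E \<and> (\<forall>e\<in>E. card e = 2)"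

definition verts :: "'a set set \<Rightarrow> 'a set" where
  "verts E = \<Union>E"

definition degree :: "'a set set \<Rightarrow> 'a \<Rightarrow> nat" where
  "degree E v = card {e\<in>E. v \<in> e}"

definition max_degree :: "'a set set \<Rightarrow> nat" where
  "max_degree E = Max (degree E ` verts E)"

definition is_walk :: "'a set set \<Rightarrow> 'a list \<Rightarrow> bool" where
  "is_walk E xs \<longleftrightarrow> xs \<noteq> [] \<and> set xs \<subseteq> verts E \<and>
     (\<forall>i. Suc i < length xs \<longrightarrow> {xs ! i, xs ! Suc i} \<in> E)"

definition connected_graph :: "'a set set \<Rightarrow> bool" where
  "connected_graph E \<longleftrightarrow>
     (\<forall>u\<in>verts E. \<forall>v\<in>verts E. \<exists>xs. is_walk E xs \<and> hd xs = u \<and> last xs = v)"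

definition is_cycle :: "'a set set \<Rightarrow> 'a list \<Rightarrow> bool" where
  "is_cycle E xs \<longleftrightarrow> length xs \<ge> 3 \<and> distinct xs \<and> is_walk E xs \<and>
     {last xs, hd xs} \<in> E"

definition is_tree :: "'a set set \<Rightarrow> bool" where
  "is_tree E \<longleftrightarrow> simple_graph E \<and> connected_graph E \<and> (\<nexists>xs. is_cycle E xs)"

text \<open>The subgraph induced by an edge set F has edge set F and vertex set the
  endpoints of F; it is semiregular if all its vertex degrees are d or d+1.\<close>
definition semiregular :: "'a set set \<Rightarrow> bool" where
  "semiregular F \<longleftrightarrow> (\<exists>d. \<forall>v\<in>verts F. degree F v = d \<or> degree F v = d + 1)"

text \<open>Partition of E into k classes given by a colouring f : E \<rightarrow> {0..<k};
  empty classes are allowed, which does not affect the minimum.\<close>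
definition sr_partition :: "'a set set \<Rightarrow> nat \<Rightarrow> bool" where
  "sr_partition E k \<longleftrightarrow> (\<exists>f :: 'a set \<Rightarrow> nat.
      (\<forall>e\<in>E. f e < k) \<and> (\<forall>i<k. semiregular {e\<in>E. f e = i}))"

definition semiregular_number :: "'a set set \<Rightarrow> nat" where
  "semiregular_number E = (LEAST k. sr_partition E k)"

end

theory Submission
  imports Defs
begin

text \<open>Every nonempty forest has a leaf: the last vertex of a longest path has no
  neighbour outside the path (else the path extends) and none on it other than its
  predecessor (else there is a cycle). Consequently a semiregular subforest, whose
  degrees are d or d+1 and include 1, has maximum degree at most 2, so at a vertex of
  maximum degree \<Delta> any partition into k semiregular classes needs 2k \<ge> \<Delta>.
  Conversely, edges can be coloured with \<lceil>\<Delta>/2\<rceil> colours so that every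
  colour meets every vertex at most twice, by removing a leaf edge, colouring the
  rest inductively and giving the leaf edge a colour used at most once at its inner
  endpoint; each colour class then has degrees in {1,2}.\<close>

definition forest :: "'a set set \<Rightarrow> bool" where
  "forest E \<longleftrightarrow> simple_graph E \<and> (\<nexists>xs. is_cycle E xs)"

lemma tree_imp_forest: "is_tree T \<Longrightarrow> forest T"
  unfolding is_tree_def forest_def by simp

lemma verts_mono: "F \<subseteq> E \<Longrightarrow> verts F \<subseteq> verts E"
  unfolding verts_def by auto

lemma is_cycle_mono:
  assumes "is_cycle F xs" "F \<subseteq> E"
  shows "is_cycle E xs"
  using assms verts_mono[OF assms(2)] unfolding is_cycle_def is_walk_def by blast

lemma forest_subset:
  assumes "forest E" "F \<subseteq> E"
  shows "forest F"
  using assms is_cycle_mono[OF _ assms(2)] finite_subset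
  unfolding forest_def simple_graph_def by blast

lemma finite_verts:
  assumes "simple_graph E"
  shows "finite (verts E)"
proof -
  have "finite e" if "e \<in> E" for e
    using assms that unfolding simple_graph_def by (metis card.infinite zero_neq_numeral)
  then show ?thesis
    using assms unfolding simple_graph_def verts_def by blast
qed

lemma edge_eq_doubleton:
  assumes "card e = 2" "v \<in> e"
  obtains w where "e = {v, w}" "w \<noteq> v"
proof -
  obtain x y where "e = {x, y}" "x \<noteq> y"
    using assms(1) by (metis card_2_iff)
  then show ?thesis
    using that assms(2) by (metis insert_commute insert_iff singletonD)
qed

lemma degree_eq_0:
  assumes "v \<notin> verts F"
  shows "degree F v = 0"
proof -
  have no_edges: "{e\<in>F. v \<in> e} = {}"
    using assms unfolding verts_def by auto
  show ?thesis
    unfolding degree_def no_edges by simp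
qed

lemma degree_ge_1:
  assumes "finite F" "v \<in> verts F"
  shows "degree F v \<ge> 1"
proof -
  have "{e\<in>F. v \<in> e} \<noteq> {}"
    using assms(2) unfolding verts_def by auto
  then show ?thesis
    using assms(1) unfolding degree_def by (simp add: Suc_le_eq card_gt_0_iff)
qed

lemma degree_mono:
  assumes "finite E" "F \<subseteq> E"
  shows "degree F v \<le> degree E v"
  unfolding degree_def using assms by (intro card_mono) auto

lemma degree_insert_le:
  assumes "finite F"
  shows "degree (insert e F) v \<le> Suc (degree F v)"
proof -
  have "degree (insert e F) v \<le> card (insert e {x\<in>F. v \<in> x})"
    unfolding degree_def using assms by (intro card_mono) auto
  also have "\<dots> \<le> Suc (degree F v)"
    unfolding degree_def using assms by (simp add: card_insert_if)
  finally show ?thesis .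
qed

lemma degree_Diff_edge:
  assumes "finite F" "e \<in> F" "v \<in> e"
  shows "degree (F - {e}) v = degree F v - 1"
proof -
  have "{x\<in>F - {e}. v \<in> x} = {x\<in>F. v \<in> x} - {e}" by auto
  then show ?thesis
    using assms unfolding degree_def by (simp add: card_Diff_singleton)
qed

lemma degree_ge_2_other_edge:
  assumes "finite F" "degree F v \<ge> 2"
  obtains e' where "e' \<in> F" "v \<in> e'" "e' \<noteq> e"
proof -
  have "\<not> {x\<in>F. v \<in> x} \<subseteq> {e}"
    using assms(2) card_mono[of "{e}" "{x\<in>F. v \<in> x}"] unfolding degree_def by auto
  then show ?thesis
    using that by blast
qed

lemma degree_sum_colour_classes:
  fixes k :: nat
  assumes "finite F" "\<forall>e\<in>F. f e < k"
  shows "degree F v = (\<Sum>i<k. degree {e\<in>F. f e = i} v)"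
proof -
  have "{e\<in>F. v \<in> e} = (\<Union>i<k. {e\<in>{x\<in>F. f x = i}. v \<in> e})"
    using assms(2) by auto
  then have "degree F v = card (\<Union>i<k. {e\<in>{x\<in>F. f x = i}. v \<in> e})"
    unfolding degree_def by simp
  also have "\<dots> = (\<Sum>i<k. degree {e\<in>F. f e = i} v)"
    unfolding degree_def using assms(1) by (intro card_UN_disjoint) auto
  finally show ?thesis .
qed

lemma degree_le_max_degree:
  assumes "simple_graph E"
  shows "degree E v \<le> max_degree E"
  using finite_verts[OF assms] degree_eq_0[of v E]
  unfolding max_degree_def by (cases "v \<in> verts E") auto

lemma max_degree_attained:
  assumes "simple_graph E" "E \<noteq> {}"
  obtains v where "degree E v = max_degree E"
proof -
  obtain e where "e \<in> E" "card e = 2"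
    using assms unfolding simple_graph_def by auto
  then have "verts E \<noteq> {}"
    unfolding verts_def by fastforce
  then have "max_degree E \<in> degree E ` verts E"
    unfolding max_degree_def using finite_verts[OF assms(1)] by (intro Max_in) auto
  then show ?thesis
    using that by auto
qed

lemma is_walk_snoc:
  assumes "is_walk F xs" "{last xs, w} \<in> F"
  shows "is_walk F (xs @ [w])"
  unfolding is_walk_def
proof (intro conjI allI impI)
  show "set (xs @ [w]) \<subseteq> verts F"
    using assms unfolding is_walk_def verts_def by auto
  fix i
  assume i: "Suc i < length (xs @ [w])"
  show "{(xs @ [w]) ! i, (xs @ [w]) ! Suc i} \<in> F"
  proof (cases "Suc i < length xs")
    case True
    then show ?thesis
      using assms(1) unfolding is_walk_def by (simp add: nth_append)
  next
    case False
    then have "i = length xs - 1" "xs \<noteq> []"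
      using i assms(1) unfolding is_walk_def by auto
    then show ?thesis
      using assms(2) by (simp add: nth_append last_conv_nth)
  qed
qed simp

lemma is_cycle_drop:
  assumes "distinct xs" "is_walk F xs" "j + 3 \<le> length xs" "{last xs, xs ! j} \<in> F"
  shows "is_cycle F (drop j xs)"
  unfolding is_cycle_def is_walk_def
proof (intro conjI allI impI)
  show "set (drop j xs) \<subseteq> verts F"
    using assms(2) set_drop_subset unfolding is_walk_def by fastforce
  show "{last (drop j xs), hd (drop j xs)} \<in> F"
    using assms(3,4) by (simp add: hd_drop_conv_nth)
  fix i
  assume "Suc i < length (drop j xs)"
  then show "{drop j xs ! i, drop j xs ! Suc i} \<in> F"
    using assms(2) unfolding is_walk_def by simp
qed (use assms in auto)

lemma longest_distinct_walk:
  assumes "simple_graph F" "F \<noteq> {}"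
  obtains xs where "distinct xs" "is_walk F xs" "length xs \<ge> 2"
    "\<And>ys. distinct ys \<Longrightarrow> is_walk F ys \<Longrightarrow> length ys \<le> length xs"
proof -
  define P where "P ys \<longleftrightarrow> distinct ys \<and> is_walk F ys" for ys :: "'a list"
  obtain a b where ab: "{a, b} \<in> F" "a \<noteq> b"
    using assms unfolding simple_graph_def by (metis card_2_iff ex_in_conv)
  have "P [a, b]"
    unfolding P_def is_walk_def verts_def using ab by (auto simp: less_Suc_eq)
  moreover have "length ys < Suc (card (verts F))" if "P ys" for ys
    using that finite_verts[OF assms(1)] card_mono distinct_card
    unfolding P_def is_walk_def by (metis less_Suc_eq_le)
  ultimately obtain xs where "P xs" "\<forall>ys. P ys \<longrightarrow> length ys \<le> length xs"
    using Lattices_Big.ex_has_greatest_nat[of P "[a, b]" length] by blast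
  with \<open>P [a, b]\<close> show ?thesis
    using that unfolding P_def by fastforce
qed

lemma forest_has_leaf:
  assumes "forest F" "F \<noteq> {}"
  shows "\<exists>v\<in>verts F. degree F v = 1"
proof (rule ccontr)
  assume no_leaf: "\<not> ?thesis"
  have simple: "simple_graph F" and acyclic: "\<nexists>xs. is_cycle F xs"
    using assms(1) unfolding forest_def by auto
  have finF: "finite F"
    using simple unfolding simple_graph_def by simp
  obtain xs where xs: "distinct xs" "is_walk F xs" "length xs \<ge> 2"
    and longest: "\<And>ys. distinct ys \<Longrightarrow> is_walk F ys \<Longrightarrow> length ys \<le> length xs"
    using longest_distinct_walk[OF simple assms(2)] by blast
  define n where "n = length xs"
  define u where "u = xs ! (n - 2)"
  have last_xs: "last xs = xs ! (n - 1)"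
    using xs(3) unfolding n_def by (intro last_conv_nth) auto
  have "Suc (n - 2) < n" "Suc (n - 2) = n - 1"
    using xs(3) unfolding n_def by auto
  then have uv: "{u, last xs} \<in> F"
    using xs(2) unfolding is_walk_def u_def last_xs n_def by metis
  have "last xs \<in> verts F"
    using xs(2) unfolding is_walk_def by auto
  then have "degree F (last xs) \<ge> 2"
    using no_leaf degree_ge_1[OF finF] by fastforce
  then obtain e' where e': "e' \<in> F" "last xs \<in> e'" "e' \<noteq> {u, last xs}"
    using degree_ge_2_other_edge[OF finF] by metis
  then obtain w where w: "e' = {last xs, w}" "w \<noteq> last xs"
    using simple edge_eq_doubleton unfolding simple_graph_def by metis
  show False
  proof (cases "w \<in> set xs")
    case True
    then obtain j where j: "j < n" "xs ! j = w"
      unfolding n_def by (metis in_set_conv_nth)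
    have "j \<noteq> n - 1" "j \<noteq> n - 2"
      using j w e'(3) unfolding last_xs u_def by (auto simp: insert_commute)
    then have "j + 3 \<le> length xs"
      using j(1) unfolding n_def by linarith
    then have "is_cycle F (drop j xs)"
      using is_cycle_drop[OF xs(1,2)] e'(1) w(1) j(2) by simp
    then show False
      using acyclic by blast
  next
    case False
    then have "distinct (xs @ [w])" "is_walk F (xs @ [w])"
      using xs(1) is_walk_snoc[OF xs(2)] e'(1) w(1) by auto
    then show False
      using longest by fastforce
  qed
qed

lemma semiregular_forest_degree_le_2:
  assumes "forest C" "semiregular C"
  shows "degree C v \<le> 2"
proof (cases "C = {}")
  case True
  then show ?thesis
    unfolding degree_def by simp
next
  case False
  obtain w where "w \<in> verts C" "degree C w = 1"
    using forest_has_leaf[OF assms(1) False] by blast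
  moreover obtain d where d: "\<forall>x\<in>verts C. degree C x = d \<or> degree C x = d + 1"
    using assms(2) unfolding semiregular_def by blast
  ultimately have "d \<le> 1"
    by force
  then show ?thesis
    using d degree_eq_0[of v C] by (cases "v \<in> verts C") force+
qed

lemma semiregular_if_degree_le_2:
  assumes "finite F" "\<And>v. degree F v \<le> 2"
  shows "semiregular F"
  unfolding semiregular_def
proof (intro exI[of _ 1] ballI)
  fix v
  assume "v \<in> verts F"
  then show "degree F v = 1 \<or> degree F v = 1 + 1"
    using degree_ge_1[OF assms(1)] assms(2)[of v] by fastforce
qed

lemma forest_edge_colouring:
  assumes "forest F" "\<And>v. degree F v \<le> 2 * k"
  shows "\<exists>f. (\<forall>e\<in>F. f e < k) \<and> (\<forall>v. \<forall>i<k. degree {e\<in>F. f e = i} v \<le> 2)"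
  using assms
proof (induction "card F" arbitrary: F rule: less_induct)
  case less
  show ?case
  proof (cases "F = {}")
    case True
    then show ?thesis
      unfolding degree_def by simp
  next
    case False
    have simple: "simple_graph F" and finF: "finite F"
      using less.prems(1) unfolding forest_def simple_graph_def by auto
    obtain v where "v \<in> verts F" "degree F v = 1"
      using forest_has_leaf[OF less.prems(1) False] by blast
    then obtain e where leaf: "{x\<in>F. v \<in> x} = {e}"
      unfolding degree_def by (metis card_1_singletonE)
    then have eF: "e \<in> F" and "v \<in> e"
      by auto
    then obtain u where e: "e = {v, u}" "u \<noteq> v"
      using simple edge_eq_doubleton unfolding simple_graph_def by metis
    define F' where "F' = F - {e}"
    have "card F' < card F"
      unfolding F'_def using finF eF by (rule card_Diff1_less)
    moreover have "forest F'"
      using forest_subset[OF less.prems(1)] unfolding F'_def by blast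
    moreover have "degree F' x \<le> 2 * k" for x
      using degree_mono[OF finF] less.prems(2)[of x] unfolding F'_def by (meson Diff_subset le_trans)
    ultimately obtain f' where f'_range: "\<forall>x\<in>F'. f' x < k"
      and f'_deg: "\<forall>x. \<forall>i<k. degree {x\<in>F'. f' x = i} x \<le> 2"
      using less.hyps by blast
    have finF': "finite F'"
      using finF unfolding F'_def by simp
    have "\<exists>i<k. degree {x\<in>F'. f' x = i} u \<le> 1"
    proof (rule ccontr)
      assume "\<not> ?thesis"
      then have "(\<Sum>i<k. 2) \<le> (\<Sum>i<k. degree {x\<in>F'. f' x = i} u)"
        by (intro sum_mono) fastforce
      then have "2 * k \<le> (\<Sum>i<k. degree {x\<in>F'. f' x = i} u)"
        by simp
      also have "\<dots> = degree F u - 1"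
        using degree_sum_colour_classes[OF finF' f'_range] degree_Diff_edge[OF finF eF]
        unfolding F'_def e by simp
      finally show False
        using less.prems(2)[of u] degree_ge_1[OF finF, of u] eF e(1)
        unfolding verts_def by fastforce
    qed
    then obtain i where i: "i < k" "degree {x\<in>F'. f' x = i} u \<le> 1"
      by blast
    define f where "f = f'(e := i)"
    have class_eq: "{x\<in>F. f x = j} = (if j = i then insert e else id) {x\<in>F'. f' x = j}" for j
      using eF unfolding f_def F'_def by auto
    have "degree {x\<in>F. f x = j} w \<le> 2" if "j < k" for w j
    proof (cases "w \<in> e \<and> j = i")
      case True
      have "degree {x\<in>F'. f' x = j} w \<le> 1"
      proof (cases "w = v")
        case True
        then have "{x\<in>{x\<in>F'. f' x = j}. w \<in> x} = {}"
          using leaf unfolding F'_def by auto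
        then show ?thesis
          unfolding degree_def by (metis card.empty zero_le)
      next
        case False
        then show ?thesis
          using i \<open>w \<in> e \<and> j = i\<close> e(1) by auto
      qed
      moreover have "degree (insert e {x\<in>F'. f' x = j}) w \<le> Suc (degree {x\<in>F'. f' x = j} w)"
        using finF' by (intro degree_insert_le) simp
      ultimately show ?thesis
        using True class_eq[of j] by simp
    next
      case False
      then have "degree {x\<in>F. f x = j} w = degree {x\<in>F'. f' x = j} w"
        unfolding degree_def class_eq[of j] by (cases "j = i") (auto intro!: arg_cong[where f = card])
      then show ?thesis
        using f'_deg that by simp
    qed
    moreover have "\<forall>x\<in>F. f x < k"
      using f'_range i(1) unfolding f_def F'_def by auto
    ultimately show ?thesis
      by blast
  qed
qed

lemma sr_partition_forest:
  assumes "forest F" "\<And>v. degree F v \<le> 2 * k"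
  shows "sr_partition F k"
proof -
  obtain f where range: "\<forall>e\<in>F. f e < k"
    and deg: "\<forall>v. \<forall>i<k. degree {e\<in>F. f e = i} v \<le> 2"
    using forest_edge_colouring[OF assms] by blast
  have "finite F"
    using assms(1) unfolding forest_def simple_graph_def by simp
  then have "semiregular {e\<in>F. f e = i}" if "i < k" for i
    using deg that by (intro semiregular_if_degree_le_2) auto
  then show ?thesis
    unfolding sr_partition_def using range by blast
qed

lemma degree_le_sr_partition:
  assumes "forest F" "sr_partition F m"
  shows "degree F v \<le> 2 * m"
proof -
  obtain f where f: "\<forall>e\<in>F. f e < m" "\<forall>i<m. semiregular {e\<in>F. f e = i}"
    using assms(2) unfolding sr_partition_def by blast
  have "finite F"
    using assms(1) unfolding forest_def simple_graph_def by simp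
  then have "degree F v = (\<Sum>i<m. degree {e\<in>F. f e = i} v)"
    using f(1) by (rule degree_sum_colour_classes)
  also have "\<dots> \<le> (\<Sum>i<m. 2)"
    using f(2) forest_subset[OF assms(1)]
    by (intro sum_mono semiregular_forest_degree_le_2) auto
  finally show ?thesis
    by simp
qed

theorem theorem3:
  fixes T :: "'a set set"
  assumes "is_tree T" and "T \<noteq> {}"
  shows "semiregular_number T = (max_degree T + 1) div 2"
proof -
  have forest: "forest T" and simple: "simple_graph T"
    using tree_imp_forest[OF assms(1)] unfolding forest_def by auto
  define k where "k = (max_degree T + 1) div 2"
  have "max_degree T \<le> 2 * k"
    unfolding k_def by presburger
  then have "degree T v \<le> 2 * k" for v
    using degree_le_max_degree[OF simple, of v] by linarith
  then have "sr_partition T k"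
    using forest by (intro sr_partition_forest)
  moreover have "k \<le> m" if "sr_partition T m" for m
  proof -
    obtain v where "degree T v = max_degree T"
      using max_degree_attained[OF simple assms(2)] .
    then have "max_degree T \<le> 2 * m"
      using degree_le_sr_partition[OF forest that, of v] by simp
    then show ?thesis
      unfolding k_def by linarith
  qed
  ultimately show ?thesis
    unfolding semiregular_number_def k_def by (intro Least_equality) auto
qed

end
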